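(* Let $\Psi$ be an increasing function on $(0,\infty)$ and $\sigma$ a monotone function on $(0,\infty)$ with $\sigma(y)\nearrow\infty$, satisfying $\sigma(x)\le\frac{1}{2e}\Psi\!\left(\frac{x}{2e}\right)$ for all $x>0$. Let $F$ be an entire function with $|F(x+iy)|\le e^{|y|\sigma(|y|)}$ for all $x+iy\in\mathbb{C}$. If $0<a<b$ and $F$ has $n\ge (b-a)\Psi(b-a)$ zeros on $(a,b)$, then $$\int_a^b\frac{\log|F(x)|}{x^2}\,dx\le -(\log 2)\left(\frac{b-a}{b}\right)^2\Psi(b-a).$$ *)

theory Defs
  imports "HOL-Complex_Analysis.Complex_Analysis"
begin

definition real_zero_count :: "(complex \<Rightarrow> complex) \<Rightarrow> real \<Rightarrow> real \<Rightarrow> nat" where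
  "real_zero_count F a b =
     (\<Sum>x\<in>{x. a < x \<and> x < b \<and> F (complex_of_real x) = 0}. nat (zorder F (complex_of_real x)))"

end

theory Submission
  imports Defs "HOL-Real_Asymp.Real_Asymp"
begin

(* Fix x in [a,b] and R = 2e(b-a). Replace every factor z - c of F coming from a zero c in (a,b)
   by the reflected factor (R^2 - cnj (c - x) (z - x)) / R, which has the same modulus on the
   circle |z - x| = R and the value R at its centre. On that circle |Im z| <= R, so the growth
   bound gives |F| <= e^((b-a) Psi(b-a)), and the maximum modulus principle at the centre yields
   |F(x)| <= ((b-a)/R)^n e^((b-a) Psi(b-a)) <= 2^(-n), using n >= (b-a) Psi(b-a).
   Integrating log|F(x)| <= -n log 2 against x^(-2) gives the bound. Integrability holds because,
   once its real zeros are divided out, log|F| is continuous plus finitely many logarithmic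
   singularities. *)

lemma ln_abs [simp]: "ln \<bar>x\<bar> = ln (x::real)"
  by (simp add: abs_if ln_minus)

lemma isCont_mult_ln: "isCont (\<lambda>u::real. u * ln u) x"
proof (cases "x = 0")
  case True
  have right: "((\<lambda>u::real. u * ln u) \<longlongrightarrow> 0) (at_right 0)"
    by real_asymp
  then have "((\<lambda>u::real. u * ln u) \<longlongrightarrow> 0) (at_left 0)"
    by (subst filterlim_at_left_to_right) (auto simp: ln_minus dest: tendsto_minus)
  with right show ?thesis
    using True by (simp add: isCont_def filterlim_split_at_real)
next
  case False
  then show ?thesis
    by (intro continuous_intros isCont_ln)
qed

lemma DERIV_ln_nonzero:
  fixes x :: real
  assumes "x \<noteq> 0"
  shows "DERIV ln x :> 1 / x"
proof (cases "x > 0")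
  case False
  with assms have "DERIV (\<lambda>u. ln (- u)) x :> 1 / x"
    by (auto intro!: derivative_eq_intros)
  then show ?thesis
    by (simp add: ln_minus)
qed (rule DERIV_ln_divide)

lemma integrable_ln_abs_diff_div_square:
  fixes a b t :: real
  assumes "0 < a" "t \<noteq> 0"
  shows "(\<lambda>x. ln \<bar>x - t\<bar> / x\<^sup>2) integrable_on {a..b}"
proof (cases "a \<le> b")
  case True
  define h where "h x = (x - t) * ln (x - t)" for x
    \<comment> \<open>kept folded: the rule for ln in derivative_eq_intros would demand x - t > 0\<close>
  define \<Phi> where "\<Phi> x = h x / (t * x) - ln x / t" for x
  have "isCont h x" for x
    unfolding h_def by (rule isCont_o2[OF _ isCont_mult_ln]) (intro continuous_intros)
  then have "continuous_on {a..b} \<Phi>"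
    unfolding \<Phi>_def using assms
    by (intro continuous_at_imp_continuous_on ballI continuous_intros) auto
  moreover have "(\<Phi> has_real_derivative ln \<bar>x - t\<bar> / x\<^sup>2) (at x)" if "x \<in> {a<..<b} - {t}" for x
  proof -
    have x: "x > 0" "x \<noteq> t" using that assms by auto
    have dln: "((\<lambda>x. ln (x - t)) has_real_derivative 1 / (x - t) * 1) (at x)"
      using x by (intro DERIV_chain2[OF DERIV_ln_nonzero] derivative_eq_intros) auto
    have "(h has_real_derivative 1 * ln (x - t) + 1 / (x - t) * 1 * (x - t)) (at x)"
      unfolding h_def by (intro DERIV_mult[OF _ dln] derivative_eq_intros) auto
    then have dh: "(h has_real_derivative ln (x - t) + 1) (at x)"
      using x by simp
    have hx: "h x = (x - t) * ln (x - t)"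
      by (simp add: h_def)
    show ?thesis
      unfolding \<Phi>_def using x assms dh
      by (auto intro!: derivative_eq_intros simp: hx field_simps power2_eq_square)
  qed
  ultimately have "((\<lambda>x. ln \<bar>x - t\<bar> / x\<^sup>2) has_integral (\<Phi> b - \<Phi> a)) {a..b}"
    using True
    by (intro fundamental_theorem_of_calculus_interior_strong[of "{t}"])
       (auto simp: has_real_derivative_iff_has_vector_derivative)
  then show ?thesis by blast
qed (simp add: integrable_on_empty)

lemma has_integral_inverse_square:
  fixes a b :: real
  assumes "0 < a" "a \<le> b"
  shows "((\<lambda>x. 1 / x\<^sup>2) has_integral (1 / a - 1 / b)) {a..b}"
proof -
  have "((\<lambda>x. 1 / x\<^sup>2) has_integral ((\<lambda>x. - 1 / x) b - (\<lambda>x. - 1 / x) a)) {a..b}"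
  proof (rule fundamental_theorem_of_calculus)
    fix x assume "x \<in> {a..b}"
    with assms have "((\<lambda>x. - 1 / x) has_real_derivative 1 / x\<^sup>2) (at x within {a..b})"
      by (auto intro!: derivative_eq_intros simp: power2_eq_square)
    then show "((\<lambda>x. - 1 / x) has_vector_derivative 1 / x\<^sup>2) (at x within {a..b})"
      by (simp add: has_real_derivative_iff_has_vector_derivative)
  qed (rule assms)
  then show ?thesis by simp
qed

lemma integral_le_spike_finite:
  fixes f g :: "'a::euclidean_space \<Rightarrow> real"
  assumes "f integrable_on S" "(g has_integral J) S" "finite T"
    and "\<And>x. x \<in> S - T \<Longrightarrow> f x \<le> g x"
  shows "integral S f \<le> J"
proof -
  have "((\<lambda>x. if x \<in> T then g x else f x) has_integral integral S f) S"
    by (rule has_integral_spike_finite[OF \<open>finite T\<close> _ integrable_integral[OF assms(1)]]) auto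
  then show ?thesis
    by (rule has_integral_le[OF _ assms(2)]) (use assms(4) in auto)
qed

lemma integral_div_square_le:
  fixes f :: "real \<Rightarrow> real"
  assumes "(\<lambda>x. f x / x\<^sup>2) integrable_on {a..b}" "finite T" "0 < a" "a \<le> b"
    and "\<And>x. x \<in> {a..b} - T \<Longrightarrow> f x \<le> - c" "0 \<le> c"
  shows "integral {a..b} (\<lambda>x. f x / x\<^sup>2) \<le> - c * (b - a) / b\<^sup>2"
proof -
  have "f x / x\<^sup>2 \<le> - c / x\<^sup>2" if "x \<in> {a..b} - T" for x
    using assms(5)[OF that] by (rule divide_right_mono) simp
  moreover have "((\<lambda>x. - c / x\<^sup>2) has_integral - c * (1 / a - 1 / b)) {a..b}"
    using has_integral_mult_right[OF has_integral_inverse_square[OF assms(3,4)], of "- c"] by simp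
  ultimately have "integral {a..b} (\<lambda>x. f x / x\<^sup>2) \<le> - c * (1 / a - 1 / b)"
    by (intro integral_le_spike_finite[OF assms(1) _ assms(2)]) auto
  also have "\<dots> \<le> - c * ((b - a) / b\<^sup>2)"
  proof -
    have "(b - a) / b\<^sup>2 \<le> (b - a) / (a * b)"
      using assms(3,4) by (intro divide_left_mono) (auto simp: power2_eq_square)
    also have "\<dots> = 1 / a - 1 / b"
      using assms(3,4) by (simp add: field_simps)
    finally show ?thesis
      using assms(6) by (intro mult_left_mono_neg) auto
  qed
  finally show ?thesis
    by simp
qed

lemma entire_factor_zero:
  fixes F :: "complex \<Rightarrow> complex"
  assumes entire: "F holomorphic_on UNIV" and nonzero: "\<exists>z. F z \<noteq> 0"
  obtains G where "G holomorphic_on UNIV" "\<And>w. F w = (w - c) ^ nat (zorder F c) * G w" "G c \<noteq> 0"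
proof -
  define m where "m = nat (zorder F c)"
  have "\<exists>r>0. zor_poly F c holomorphic_on cball c r \<and>
      (\<forall>w\<in>cball c r. F w = zor_poly F c w * (w - c) ^ m \<and> zor_poly F c w \<noteq> 0)"
    using zorder_exist_zero[of F UNIV c] entire nonzero unfolding m_def by auto
  then obtain r where r: "r > 0" "zor_poly F c holomorphic_on cball c r"
    "\<And>w. w \<in> cball c r \<Longrightarrow> F w = zor_poly F c w * (w - c) ^ m \<and> zor_poly F c w \<noteq> 0"
    by blast
  define G where "G w = (if w = c then zor_poly F c c else F w / (w - c) ^ m)" for w
  have "G holomorphic_on ball c r"
    by (rule holomorphic_transform[OF holomorphic_on_subset[OF r(2)]]) (use r(3) in \<open>auto simp: G_def\<close>)
  moreover have "G holomorphic_on UNIV - {c}"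
    by (rule holomorphic_transform[where f = "\<lambda>w. F w / (w - c) ^ m"])
       (auto intro!: holomorphic_intros holomorphic_on_subset[OF entire] simp: G_def)
  ultimately have "G holomorphic_on ball c r \<union> (UNIV - {c})"
    by (rule holomorphic_on_Un) auto
  moreover have "ball c r \<union> (UNIV - {c}) = UNIV"
    using r(1) by auto
  moreover have "F w = (w - c) ^ m * G w" for w
    using r(3)[of c] r(1) by (cases "w = c") (auto simp: G_def)
  moreover have "G c \<noteq> 0"
    using r(3)[of c] r(1) by (simp add: G_def)
  ultimately show ?thesis
    using that unfolding m_def by auto
qed

lemma entire_factor_zeros:
  fixes F :: "complex \<Rightarrow> complex"
  assumes "finite Z" "F holomorphic_on UNIV" "\<exists>z. F z \<noteq> 0"
  shows "\<exists>G. G holomorphic_on UNIV \<and> (\<forall>w. F w = (\<Prod>c\<in>Z. (w - c) ^ nat (zorder F c)) * G w)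
             \<and> (\<forall>c\<in>Z. G c \<noteq> 0)"
  using assms
proof (induction Z arbitrary: F rule: finite_induct)
  case (insert c Z)
  define k where "k = nat (zorder F c)"
  obtain G1 where G1: "G1 holomorphic_on UNIV" "\<And>w. F w = (w - c) ^ k * G1 w" "G1 c \<noteq> 0"
    using entire_factor_zero[OF insert.prems] unfolding k_def by blast
  from insert.prems(2) obtain z0 where z0: "F z0 \<noteq> 0" by blast
  then have "\<exists>z. G1 z \<noteq> 0"
    using G1(2)[of z0] by auto
  then obtain G where G: "G holomorphic_on UNIV"
    "\<And>w. G1 w = (\<Prod>d\<in>Z. (w - d) ^ nat (zorder G1 d)) * G w" "\<And>d. d \<in> Z \<Longrightarrow> G d \<noteq> 0"
    using insert.IH[OF G1(1)] by blast
  have F_eq: "F = (\<lambda>w. (w - c) ^ k * G1 w)"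
    using G1(2) by auto
  have "zorder F d = zorder G1 d" if "d \<in> Z" for d
  proof -
    have "\<forall>\<^sub>F w in at d. F w \<noteq> 0"
      using non_zero_neighbour_alt[OF insert.prems(1) _ _ _ _ z0, of d] by (auto elim: eventually_mono)
    then have "zorder F d = zorder (\<lambda>w. (w - c) ^ k) d + zorder G1 d"
      unfolding F_eq
      by (intro zorder_times_analytic analytic_intros holomorphic_on_imp_analytic_at[OF G1(1)]) auto
    moreover have "zorder (\<lambda>w. (w - c) ^ k) d = 0"
      using that insert.hyps by (intro zorder_eq_0I analytic_intros) auto
    ultimately show ?thesis
      by simp
  qed
  then have "F w = (\<Prod>d\<in>insert c Z. (w - d) ^ nat (zorder F d)) * G w" for w
    using insert.hyps G1(2)[of w] G(2)[of w] unfolding k_def by (simp add: mult.assoc cong: prod.cong)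
  moreover have "G c \<noteq> 0"
    using G1(3) G(2)[of c] by auto
  ultimately show ?case
    using G(1,3) by blast
qed auto

lemma finite_real_zeros:
  fixes F :: "complex \<Rightarrow> complex"
  assumes "F holomorphic_on UNIV" "\<exists>z. F z \<noteq> 0"
  shows "finite {x \<in> {a..b}. F (of_real x) = 0}"
proof -
  have "finite {z \<in> of_real ` {a..b}. F z = 0}"
  proof (cases "F constant_on UNIV")
    case True
    with assms(2) show ?thesis
      unfolding constant_on_def by auto
  next
    case False
    then show ?thesis
      by (intro holomorphic_compact_finite_zeros[OF assms(1)] compact_continuous_image
          continuous_intros) auto
  qed
  then have "finite (of_real ` {x \<in> {a..b}. F (of_real x) = 0} :: complex set)"
    by (rule finite_subset[rotated]) auto
  then show ?thesis
    by (rule finite_imageD) (simp add: inj_on_def)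
qed

lemma integrable_ln_norm_div_square:
  fixes F :: "complex \<Rightarrow> complex"
  assumes entire: "F holomorphic_on UNIV" and nonzero: "\<exists>z. F z \<noteq> 0" and "0 < a"
  shows "(\<lambda>x. ln (norm (F (of_real x))) / x\<^sup>2) integrable_on {a..b}"
proof -
  define Z where "Z = {x \<in> {a..b}. F (of_real x) = 0}"
  define m where "m t = nat (zorder F (of_real t))" for t
  have Z: "finite Z"
    unfolding Z_def by (rule finite_real_zeros[OF entire nonzero])
  have inj: "inj_on (of_real :: real \<Rightarrow> complex) Z"
    by (simp add: inj_on_def)
  obtain G where G: "G holomorphic_on UNIV"
    "\<And>w. F w = (\<Prod>c\<in>of_real ` Z. (w - c) ^ nat (zorder F c)) * G w"
    "\<And>c. c \<in> of_real ` Z \<Longrightarrow> G c \<noteq> 0"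
    using entire_factor_zeros[of "of_real ` Z" F] Z entire nonzero by auto
  have G_nonzero: "G (of_real x) \<noteq> 0" if "x \<in> {a..b}" for x
    using G(2)[of "of_real x"] G(3)[of "of_real x"] that unfolding Z_def
    by (cases "F (of_real x) = 0") auto
  have split: "ln (norm (F (of_real x))) / x\<^sup>2
      = (\<Sum>t\<in>Z. m t * (ln \<bar>x - t\<bar> / x\<^sup>2)) + ln (norm (G (of_real x))) / x\<^sup>2"
    if x: "x \<in> {a..b} - Z" for x
  proof -
    have "norm (F (of_real x)) = (\<Prod>t\<in>Z. \<bar>x - t\<bar> ^ m t) * norm (G (of_real x))"
      unfolding G(2)[of "of_real x"] norm_mult prod.reindex[OF inj] m_def
      by (simp add: norm_power flip: prod_norm of_real_diff)
    moreover have "(\<Prod>t\<in>Z. \<bar>x - t\<bar> ^ m t) > 0"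
      using x by (intro prod_pos) auto
    moreover have "ln (\<Prod>t\<in>Z. \<bar>x - t\<bar> ^ m t) = (\<Sum>t\<in>Z. m t * ln \<bar>x - t\<bar>)"
      using x by (subst ln_prod[OF Z]) (auto simp: ln_realpow)
    ultimately have "ln (norm (F (of_real x))) = (\<Sum>t\<in>Z. m t * ln \<bar>x - t\<bar>) + ln (norm (G (of_real x)))"
      using G_nonzero[of x] x by (simp add: ln_mult_pos)
    then show ?thesis
      by (simp add: add_divide_distrib sum_divide_distrib)
  qed
  have "(\<lambda>x. (\<Sum>t\<in>Z. m t * (ln \<bar>x - t\<bar> / x\<^sup>2)) + ln (norm (G (of_real x))) / x\<^sup>2)
      integrable_on {a..b}"
  proof (intro integrable_add integrable_sum integrable_on_mult_right Z)
    show "(\<lambda>x. ln \<bar>x - t\<bar> / x\<^sup>2) integrable_on {a..b}" if "t \<in> Z" for t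
      using that assms(3) by (intro integrable_ln_abs_diff_div_square) (auto simp: Z_def)
    have "continuous_on UNIV G"
      using G(1) by (rule holomorphic_on_imp_continuous_on)
    then have "continuous_on {a..b} (\<lambda>x. ln (norm (G (of_real x))) / x\<^sup>2)"
      using assms(3) G_nonzero
      by (intro continuous_intros continuous_on_compose2[OF \<open>continuous_on UNIV G\<close>]) auto
    then show "(\<lambda>x. ln (norm (G (of_real x))) / x\<^sup>2) integrable_on {a..b}"
      by (rule integrable_continuous_interval)
  qed
  then show ?thesis
    by (rule integrable_spike_finite[OF Z, rotated]) (use split in auto)
qed

lemma norm_Blaschke_factor:
  fixes w d :: complex
  assumes "norm w = R"
  shows "norm ((of_real R)\<^sup>2 - cnj d * w) = R * norm (w - d)"
proof -
  have "(of_real R)\<^sup>2 - cnj d * w = w * cnj (w - d)"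
    using complex_norm_square[of w] assms by (simp add: algebra_simps)
  then show ?thesis
    using assms by (simp only: norm_mult complex_mod_cnj)
qed

lemma norm_center_mult_radius_pow_le:
  fixes G :: "complex \<Rightarrow> complex" and m :: "complex \<Rightarrow> nat"
  assumes "G holomorphic_on cball z0 R" "R > 0"
    and "\<And>z. z \<in> sphere z0 R \<Longrightarrow> norm ((\<Prod>c\<in>Z. (z - c) ^ m c) * G z) \<le> M"
  shows "norm (G z0) * R ^ (\<Sum>c\<in>Z. m c) \<le> M"
proof -
  define B where "B z = (\<Prod>c\<in>Z. (((of_real R)\<^sup>2 - cnj (c - z0) * (z - z0)) / of_real R) ^ m c)" for z
    \<comment> \<open>on the circle |B| agrees with the modulus of the zero factors, while B z0 is a power of R\<close>
  have hol: "(\<lambda>z. G z * B z) holomorphic_on cball z0 R"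
    unfolding B_def using assms(1,2) by (intro holomorphic_intros) auto
  have "norm (G z * B z) \<le> M" if "z \<in> sphere z0 R" for z
  proof -
    have zR: "norm (z - z0) = R"
      using that by (simp add: dist_norm norm_minus_commute)
    have "norm (B z) = (\<Prod>c\<in>Z. (norm ((of_real R)\<^sup>2 - cnj (c - z0) * (z - z0)) / R) ^ m c)"
      using assms(2) by (simp add: B_def norm_divide norm_power del: complex_cnj_diff flip: prod_norm)
    also have "\<dots> = (\<Prod>c\<in>Z. norm (z - c) ^ m c)"
      using assms(2) by (intro prod.cong refl) (simp add: norm_Blaschke_factor[OF zR] del: complex_cnj_diff)
    finally have "norm (G z * B z) = norm ((\<Prod>c\<in>Z. (z - c) ^ m c) * G z)"
      by (simp add: norm_mult norm_power flip: prod_norm)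
    then show ?thesis
      using assms(3)[OF that] by simp
  qed
  then have "norm (G z0 * B z0) \<le> M"
    using maximum_modulus_frontier[of "\<lambda>z. G z * B z" "cball z0 R" M z0]
      holomorphic_on_subset[OF hol ball_subset_cball] holomorphic_on_imp_continuous_on[OF hol] assms(2)
    by simp
  moreover have "B z0 = of_real R ^ (\<Sum>c\<in>Z. m c)"
    using assms(2) by (simp add: B_def power_sum power2_eq_square)
  ultimately show ?thesis
    using assms(2) by (simp add: norm_mult norm_power)
qed

lemma norm_mult_radius_pow_zero_count_le:
  fixes F :: "complex \<Rightarrow> complex"
  assumes entire: "F holomorphic_on UNIV" and nonzero: "\<exists>z. F z \<noteq> 0"
    and x: "x \<in> {a..b}" and "R > 0"
    and bound: "\<And>z. z \<in> sphere (of_real x) R \<Longrightarrow> norm (F z) \<le> M"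
  shows "norm (F (of_real x)) * R ^ real_zero_count F a b \<le> (b - a) ^ real_zero_count F a b * M"
proof -
  define Zr where "Zr = {t. a < t \<and> t < b \<and> F (of_real t) = 0}"
  define Z :: "complex set" where "Z = of_real ` Zr"
  define P where "P w = (\<Prod>c\<in>Z. (w - c) ^ nat (zorder F c))" for w
  define N where "N = real_zero_count F a b"
  have "finite Zr"
    using finite_real_zeros[OF entire nonzero, of a b] by (rule finite_subset[rotated]) (auto simp: Zr_def)
  then obtain G where G: "G holomorphic_on UNIV" "\<And>w. F w = P w * G w"
    using entire_factor_zeros[of Z F] entire nonzero unfolding P_def Z_def by blast
  have N_eq: "N = (\<Sum>c\<in>Z. nat (zorder F c))"
    unfolding N_def real_zero_count_def Z_def Zr_def by (simp add: sum.reindex inj_on_def)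
  have "norm (G (of_real x)) * R ^ N \<le> M"
    unfolding N_eq
    by (rule norm_center_mult_radius_pow_le[OF holomorphic_on_subset[OF G(1)] \<open>R > 0\<close>])
       (use bound G(2) in \<open>auto simp: P_def\<close>)
  moreover have "norm (P (of_real x)) \<le> (b - a) ^ N"
  proof -
    have "norm (of_real x - c) \<le> b - a" if "c \<in> Z" for c
      using that x by (auto simp: Z_def Zr_def simp flip: of_real_diff)
    then have "norm (P (of_real x)) \<le> (\<Prod>c\<in>Z. (b - a) ^ nat (zorder F c))"
      unfolding P_def by (auto simp: norm_power intro!: prod_mono power_mono simp flip: prod_norm)
    then show ?thesis
      by (simp add: N_eq power_sum)
  qed
  ultimately have "norm (P (of_real x)) * (norm (G (of_real x)) * R ^ N) \<le> (b - a) ^ N * M"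
    using x \<open>R > 0\<close> by (intro mult_mono) auto
  then show ?thesis
    by (simp add: G(2) norm_mult N_def mult.assoc)
qed

lemma ln_norm_le_by_zero_count:
  fixes F :: "complex \<Rightarrow> complex"
  assumes entire: "F holomorphic_on UNIV" and nonzero: "\<exists>z. F z \<noteq> 0"
    and x: "x \<in> {a..b}" and "a < b" and "F (of_real x) \<noteq> 0"
    and bound: "\<And>z. z \<in> sphere (of_real x) (2 * exp 1 * (b - a)) \<Longrightarrow> norm (F z) \<le> exp K"
  shows "ln (norm (F (of_real x))) \<le> K - (1 + ln 2) * real_zero_count F a b"
proof -
  define R where "R = 2 * exp 1 * (b - a)"
  define N where "N = real_zero_count F a b"
  have "R > 0"
    using \<open>a < b\<close> by (simp add: R_def)
  have "norm (F (of_real x)) * R ^ N \<le> (b - a) ^ N * exp K"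
    unfolding N_def using norm_mult_radius_pow_zero_count_le[OF entire nonzero x \<open>R > 0\<close>] bound
    by (simp add: R_def)
  then have "ln (norm (F (of_real x)) * R ^ N) \<le> ln ((b - a) ^ N * exp K)"
    using \<open>R > 0\<close> \<open>a < b\<close> \<open>F (of_real x) \<noteq> 0\<close> by simp
  then have "ln (norm (F (of_real x))) + N * ln R \<le> N * ln (b - a) + K"
    using \<open>R > 0\<close> \<open>a < b\<close> \<open>F (of_real x) \<noteq> 0\<close> by (simp add: ln_mult_pos ln_realpow)
  moreover have "ln R = ln 2 + 1 + ln (b - a)"
    using \<open>a < b\<close> by (simp add: R_def ln_mult_pos)
  ultimately show ?thesis
    by (simp add: N_def algebra_simps)
qed

lemma norm_le_on_circle_of_growth:
  fixes F :: "complex \<Rightarrow> complex" and \<sigma> \<Psi> :: "real \<Rightarrow> real"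
  assumes sigma_mono: "mono_on {0<..} \<sigma>"
    and sigma_Psi: "\<And>x. x > 0 \<Longrightarrow> \<sigma> x \<le> 1 / (2 * exp 1) * \<Psi> (x / (2 * exp 1))"
    and growth: "\<And>x y. norm (F (Complex x y)) \<le> exp (\<bar>y\<bar> * \<sigma> \<bar>y\<bar>)"
    and "0 < r" "0 \<le> \<Psi> r"
    and z: "z \<in> sphere (of_real x) (2 * exp 1 * r)"
  shows "norm (F z) \<le> exp (r * \<Psi> r)"
proof -
  define R where "R = 2 * exp 1 * r"
  define y where "y = \<bar>Im z\<bar>"
  have "y \<le> R"
    using z abs_Im_le_cmod[of "z - of_real x"] by (simp add: y_def R_def dist_norm norm_minus_commute)
  have "y * \<sigma> y \<le> R * (\<Psi> r / (2 * exp 1))"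
  proof (cases "y = 0")
    case False
    then have "\<sigma> y \<le> \<sigma> R"
      using \<open>y \<le> R\<close> by (intro mono_onD[OF sigma_mono]) (auto simp: y_def)
    also have "\<dots> \<le> \<Psi> r / (2 * exp 1)"
      using sigma_Psi[of R] \<open>0 < r\<close> by (simp add: R_def)
    finally have "y * \<sigma> y \<le> y * (\<Psi> r / (2 * exp 1))"
      by (rule mult_left_mono) (simp add: y_def)
    also have "\<dots> \<le> R * (\<Psi> r / (2 * exp 1))"
      using \<open>y \<le> R\<close> \<open>0 \<le> \<Psi> r\<close> by (intro mult_right_mono) auto
    finally show ?thesis .
  qed (use \<open>0 < r\<close> \<open>0 \<le> \<Psi> r\<close> in \<open>simp add: R_def\<close>)
  also have "\<dots> = r * \<Psi> r"
    by (simp add: R_def)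
  finally have "\<bar>Im z\<bar> * \<sigma> \<bar>Im z\<bar> \<le> r * \<Psi> r"
    by (simp add: y_def)
  then show ?thesis
    using growth[of "Re z" "Im z"] by (smt (verit) complex.collapse exp_mono)
qed

theorem lemma3p5:
  fixes \<Psi> \<sigma> :: "real \<Rightarrow> real" and F :: "complex \<Rightarrow> complex" and a b :: real and n :: nat
  assumes Psi_mono: "mono_on {0<..} \<Psi>"
    and sigma_mono: "mono_on {0<..} \<sigma>"
    and sigma_inf: "filterlim \<sigma> at_top at_top"
    and sigma_Psi: "\<And>x. x > 0 \<Longrightarrow> \<sigma> x \<le> 1 / (2 * exp 1) * \<Psi> (x / (2 * exp 1))"
    and entire: "F holomorphic_on UNIV"
    and growth: "\<And>x y. norm (F (Complex x y)) \<le> exp (\<bar>y\<bar> * \<sigma> \<bar>y\<bar>)"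
    and nonzero: "\<exists>z. F z \<noteq> 0"
    and ab: "0 < a" "a < b"
    and zeros: "real_zero_count F a b = n"
    and n_ge: "real n \<ge> (b - a) * \<Psi> (b - a)"
  shows "integral {a..b} (\<lambda>x. ln (norm (F (complex_of_real x))) / x\<^sup>2)
           \<le> - ln 2 * ((b - a) / b)\<^sup>2 * \<Psi> (b - a)"
proof -
  let ?f = "\<lambda>x. ln (norm (F (of_real x))) / x\<^sup>2"
  have integrable: "?f integrable_on {a..b}"
    by (rule integrable_ln_norm_div_square[OF entire nonzero ab(1)])
  show ?thesis
  proof (cases "\<Psi> (b - a) \<le> 0")
    case True
    have "ln (norm (F (of_real x))) \<le> 0" for x
      using growth[of x 0] by (cases "F (of_real x) = 0") (simp_all add: complex_of_real_def)
    then have "integral {a..b} ?f \<le> 0"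
      using integral_le[OF integrable integrable_0] by (simp add: divide_nonpos_nonneg)
    also have "0 \<le> - ln 2 * ((b - a) / b)\<^sup>2 * \<Psi> (b - a)"
      using True by (intro mult_nonpos_nonpos) auto
    finally show ?thesis .
  next
    case False
    define C where "C = ln 2 * ((b - a) * \<Psi> (b - a))"
    have "ln (norm (F (of_real x))) \<le> - C" if "x \<in> {a..b} - {x \<in> {a..b}. F (of_real x) = 0}" for x
      \<comment> \<open>the zeros must be excluded since ln 0 = 0\<close>
    proof -
      have "ln (norm (F (of_real x))) \<le> (b - a) * \<Psi> (b - a) - (1 + ln 2) * real_zero_count F a b"
        using that ab False
        by (intro ln_norm_le_by_zero_count[OF entire nonzero]
            norm_le_on_circle_of_growth[OF sigma_mono sigma_Psi growth]) auto
      also have "\<dots> \<le> - C"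
        using zeros n_ge mult_right_mono[of "(b - a) * \<Psi> (b - a)" n "1 + ln 2"]
        by (simp add: C_def algebra_simps)
      finally show ?thesis .
    qed
    then have "integral {a..b} ?f \<le> - C * (b - a) / b\<^sup>2"
      using False ab
      by (intro integral_div_square_le[OF integrable finite_real_zeros[OF entire nonzero]])
         (auto simp: C_def)
    also have "\<dots> = - ln 2 * ((b - a) / b)\<^sup>2 * \<Psi> (b - a)"
      by (simp add: C_def power2_eq_square)
    finally show ?thesis .
  qed
qed

end
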